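(* Let $(A,\succ,\prec)$ be an anti-pre-Novikov algebra and $s\in A\otimes A$. Then $s$ is invariant if and only if for all $x\in A$, $\zeta\in A^*$: $L_{\star}(x)T_s(\zeta)+T_s(L_{\succ}^*(x)\zeta)=0$ and $L_{\odot}(x)T_s(\zeta)+T_s(L_{\circ}^*(x)\zeta)=0$. Moreover, these two identities hold (for all $x,\zeta$) if and only if for all $\zeta,\eta\in A^*$: $L_{\star}^*(T_s(\zeta))\eta=R_{\succ}^*(T_{\tau(s)}(\eta))\zeta$ and $R_{\odot}^*(T_s(\zeta))\eta=R_{\circ}^*(T_{\tau(s)}(\eta))\zeta$.
   Context: $A$ is finite-dimensional over a field $k$. An anti-pre-Novikov algebra is $(A,\succ,\prec)$ such that with $x\circ y=x\succ y+x\prec y$: $(x\circ y-y\circ x)\succ z=y\succ(x\succ z)-x\succ(y\succ z)$; $x\prec(y\circ z)=(y\succ x)\prec z-(x\prec y)\prec z-y\succ(x\prec z)$; $(x\circ y)\succ z=-(x\succ z)\prec y$; $(x\prec y)\prec z=(x\prec z)\prec y$; $(x\circ y-y\circ x)\prec z=x\succ(y\circ z)-y\succ(x\circ z)$. Notation: $L_\ast(x)y=x\ast y$, $R_\ast(x)y=y\ast x$ for $\ast\in\{\succ,\prec,\circ\}$; $L_{\star}=L_{\circ}+R_{\circ}$, $L_{\odot}=L_{\succ}+R_{\prec}$, $R_{\odot}=R_{\succ}+L_{\prec}$; for $f:A\to\mathrm{End}(A)$, $\langle f^*(x)\zeta,y\rangle=-\langle\zeta,f(x)y\rangle$; $\tau$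 is the flip; $T_s:A^*\to A$, $\langle T_s(\zeta),\eta\rangle=\langle s,\zeta\otimes\eta\rangle$. $s$ is called invariant if $(I\otimes L_{\star}(x)-L_{\succ}(x)\otimes I)s=0$ and $(L_{\circ}(x)\otimes I-I\otimes L_{\odot}(x))s=0$ for all $x\in A$. *)

theory Defs
  imports Main "HOL-Library.Function_Algebras"
begin

text \<open>A finite-dimensional vector space over a field 'k is represented, after choosing a basis
indexed by the finite type 'n, by the coordinate space 'n \<Rightarrow> 'k.  The dual space A^* is
represented by coordinate functions 'n \<Rightarrow> 'k with respect to the dual basis, tensors in
A \<otimes> A by their coordinate arrays 'n \<Rightarrow> 'n \<Rightarrow> 'k (s = sum of s i j e_i \<otimes> e_j).\<close>

type_synonym ('n, 'k) vec = "'n \<Rightarrow> 'k"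
type_synonym ('n, 'k) binop = "('n,'k) vec \<Rightarrow> ('n,'k) vec \<Rightarrow> ('n,'k) vec"
type_synonym ('n, 'k) endo = "('n,'k) vec \<Rightarrow> ('n,'k) vec"
type_synonym ('n, 'k) tensor2 = "'n \<Rightarrow> 'n \<Rightarrow> 'k"

definition basis_vec :: "'n \<Rightarrow> ('n::finite, 'k::field) vec" where
  "basis_vec i = (\<lambda>j. if j = i then 1 else 0)"

definition scal :: "'k \<Rightarrow> ('n, 'k::field) vec \<Rightarrow> ('n, 'k) vec" where
  "scal c x = (\<lambda>i. c * x i)"

definition pairing :: "('n::finite, 'k::field) vec \<Rightarrow> ('n, 'k) vec \<Rightarrow> 'k" where
  "pairing \<zeta> y = (\<Sum>i\<in>UNIV. \<zeta> i * y i)"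

definition bilinear_op :: "('n::finite, 'k::field) binop \<Rightarrow> bool" where
  "bilinear_op m \<longleftrightarrow>
     (\<forall>x y z. m (x + y) z = m x z + m y z) \<and>
     (\<forall>x y z. m x (y + z) = m x y + m x z) \<and>
     (\<forall>c x y. m (scal c x) y = scal c (m x y)) \<and>
     (\<forall>c x y. m x (scal c y) = scal c (m x y))"

definition circ_op :: "('n::finite, 'k::field) binop \<Rightarrow> ('n,'k) binop \<Rightarrow> ('n,'k) binop" where
  "circ_op succ prec x y = succ x y + prec x y"

definition anti_pre_Novikov :: "('n::finite, 'k::field) binop \<Rightarrow> ('n,'k) binop \<Rightarrow> bool" where
  "anti_pre_Novikov succ prec \<longleftrightarrow>
     bilinear_op succ \<and> bilinear_op prec \<and>
     (let circ = circ_op succ prec in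
     (\<forall>x y z. succ (circ x y - circ y x) z = succ y (succ x z) - succ x (succ y z)) \<and>
     (\<forall>x y z. prec x (circ y z) = prec (succ y x) z - prec (prec x y) z - succ y (prec x z)) \<and>
     (\<forall>x y z. succ (circ x y) z = - prec (succ x z) y) \<and>
     (\<forall>x y z. prec (prec x y) z = prec (prec x z) y) \<and>
     (\<forall>x y z. prec (circ x y - circ y x) z = succ x (circ y z) - succ y (circ x z)))"

definition Lop :: "('n::finite, 'k::field) binop \<Rightarrow> ('n,'k) vec \<Rightarrow> ('n,'k) endo" where
  "Lop m x = (\<lambda>y. m x y)"

definition Rop :: "('n::finite, 'k::field) binop \<Rightarrow> ('n,'k) vec \<Rightarrow> ('n,'k) endo" where
  "Rop m x = (\<lambda>y. m y x)"

definition L_star :: "('n::finite, 'k::field) binop \<Rightarrow> ('n,'k) binop \<Rightarrow> ('n,'k) vec \<Rightarrow> ('n,'k) endo" where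
  "L_star succ prec x = (\<lambda>y. Lop (circ_op succ prec) x y + Rop (circ_op succ prec) x y)"

definition L_odot :: "('n::finite, 'k::field) binop \<Rightarrow> ('n,'k) binop \<Rightarrow> ('n,'k) vec \<Rightarrow> ('n,'k) endo" where
  "L_odot succ prec x = (\<lambda>y. Lop succ x y + Rop prec x y)"

definition R_odot :: "('n::finite, 'k::field) binop \<Rightarrow> ('n,'k) binop \<Rightarrow> ('n,'k) vec \<Rightarrow> ('n,'k) endo" where
  "R_odot succ prec x = (\<lambda>y. Rop succ x y + Lop prec x y)"

text \<open>dual operator: pairing (f^*(x) \<zeta>) y = - pairing \<zeta> (f(x) y); in coordinates w.r.t. the dual basis\<close>
definition dual_rep :: "(('n::finite, 'k::field) vec \<Rightarrow> ('n,'k) endo) \<Rightarrow> ('n,'k) vec \<Rightarrow> ('n,'k) endo" where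
  "dual_rep f x \<zeta> = (\<lambda>j. - pairing \<zeta> (f x (basis_vec j)))"

text \<open>T_s : A^* \<rightarrow> A with pairing (T_s \<zeta>) \<eta> = <s, \<zeta> \<otimes> \<eta>>\<close>
definition T_op :: "('n::finite, 'k::field) tensor2 \<Rightarrow> ('n,'k) vec \<Rightarrow> ('n,'k) vec" where
  "T_op s \<zeta> = (\<lambda>j. \<Sum>i\<in>UNIV. s i j * \<zeta> i)"

definition flip :: "('n, 'k) tensor2 \<Rightarrow> ('n, 'k) tensor2" where
  "flip s = (\<lambda>i j. s j i)"

definition tensor_map :: "('n::finite, 'k::field) endo \<Rightarrow> ('n,'k) endo \<Rightarrow> ('n,'k) tensor2 \<Rightarrow> ('n,'k) tensor2" where
  "tensor_map F G s = (\<lambda>a b. \<Sum>i\<in>UNIV. \<Sum>j\<in>UNIV. s i j * F (basis_vec i) a * G (basis_vec j) b)"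

definition invariant :: "('n::finite, 'k::field) binop \<Rightarrow> ('n,'k) binop \<Rightarrow> ('n,'k) tensor2 \<Rightarrow> bool" where
  "invariant succ prec s \<longleftrightarrow>
     (\<forall>x. tensor_map id (L_star succ prec x) s - tensor_map (Lop succ x) id s = 0) \<and>
     (\<forall>x. tensor_map (Lop (circ_op succ prec) x) id s - tensor_map id (L_odot succ prec x) s = 0)"

end

theory Submission
  imports Defs
begin

text \<open>Only the bilinearity of the two products enters.  In coordinates, the matrix of
\<zeta> \<mapsto> G (T_s \<zeta>) + T_s (L^*(x) \<zeta>) is the tensor (id \<otimes> G) s - (L(x) \<otimes> id) s, so the
first equivalence says that a tensor vanishes iff its contraction map does.  For the second,
T_\<tau>(s) is the transpose of T_s; pairing the dual identities with \<eta> therefore turns them into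
the operator identities at x = e_j, which suffices by linearity in x.  The two cases match up
because L_\<star>(x) y is symmetric in x, y and R_\<odot>(y) x = L_\<odot>(x) y.\<close>

lemma sum_fun_apply: "(sum f A :: 'a \<Rightarrow> 'b::comm_monoid_add) b = (\<Sum>i\<in>A. f i b)"
  by (induction A rule: infinite_finite_induct) auto

lemma sum_basis_vec [simp]:
  fixes f :: "'n::finite \<Rightarrow> 'k::field"
  shows "(\<Sum>j\<in>UNIV. basis_vec i j * f j) = f i" "(\<Sum>j\<in>UNIV. f j * basis_vec i j) = f i"
    "(\<Sum>j\<in>UNIV. basis_vec j i * f j) = f i" "(\<Sum>j\<in>UNIV. f j * basis_vec j i) = f i"
  by (simp_all add: basis_vec_def if_distrib[where f="\<lambda>t. t * _"]
      if_distrib[where f="\<lambda>t. _ * t"] cong: if_cong)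

lemma vec_eq_sum_basis: "(x::('n::finite,'k::field) vec) = (\<Sum>i\<in>UNIV. scal (x i) (basis_vec i))"
  by (simp add: fun_eq_iff sum_fun_apply scal_def)

definition vec_linear :: "(('n::finite, 'k::field) vec \<Rightarrow> ('m, 'k) vec) \<Rightarrow> bool" where
  "vec_linear F \<longleftrightarrow> (\<forall>x y. F (x + y) = F x + F y) \<and> (\<forall>c x. F (scal c x) = scal c (F x))"

lemma vec_linear_expansion:
  fixes F :: "('n::finite, 'k::field) vec \<Rightarrow> ('m, 'k) vec"
  assumes "vec_linear F"
  shows "F x b = (\<Sum>i\<in>UNIV. x i * F (basis_vec i) b)"
proof -
  have add: "F (x + y) = F x + F y" and hom: "F (scal c x) = scal c (F x)" for x y c
    using assms unfolding vec_linear_def by auto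
  have "F 0 = 0" using add[of 0 0] by simp
  then have F_sum: "F (sum g A) = (\<Sum>i\<in>A. F (g i))" for g :: "'n \<Rightarrow> ('n,'k) vec" and A
    by (induction A rule: infinite_finite_induct) (simp_all add: add)
  have "F x = (\<Sum>i\<in>UNIV. scal (x i) (F (basis_vec i)))"
    by (subst vec_eq_sum_basis) (simp add: F_sum hom)
  then show ?thesis by (simp add: sum_fun_apply scal_def)
qed

lemma vec_linear_add:
  "vec_linear F \<Longrightarrow> vec_linear G \<Longrightarrow> vec_linear (\<lambda>x. F x + G x)"
  unfolding vec_linear_def by (simp add: scal_def fun_eq_iff algebra_simps)

lemma vec_linear_comp:
  "vec_linear F \<Longrightarrow> vec_linear G \<Longrightarrow> vec_linear (\<lambda>x. F (G x))"
  unfolding vec_linear_def by simp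

lemma vec_linear_zero_iff_basis:
  assumes "vec_linear F"
  shows "(\<forall>x. F x = 0) \<longleftrightarrow> (\<forall>i. F (basis_vec i) = 0)"
proof
  assume "\<forall>i. F (basis_vec i) = 0"
  then show "\<forall>x. F x = 0"
    by (intro allI ext, subst vec_linear_expansion[OF assms]) simp
qed simp

lemma bilinear_op_iff_vec_linear:
  "bilinear_op m \<longleftrightarrow> (\<forall>y. vec_linear (\<lambda>x. m x y)) \<and> (\<forall>x. vec_linear (m x))"
  unfolding bilinear_op_def vec_linear_def by blast

lemma bilinear_circ_op:
  "bilinear_op succ \<Longrightarrow> bilinear_op prec \<Longrightarrow> bilinear_op (circ_op succ prec)"
  unfolding bilinear_op_def circ_op_def by (auto simp: scal_def algebra_simps fun_eq_iff)

lemma L_star_commute: "L_star succ prec x y = L_star succ prec y x"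
  unfolding L_star_def Lop_def Rop_def by (simp add: add.commute)

lemma R_odot_eq_L_odot: "R_odot succ prec y x = L_odot succ prec x y"
  unfolding R_odot_def L_odot_def Lop_def Rop_def by simp

lemma vec_linear_L_star:
  assumes "bilinear_op succ" "bilinear_op prec"
  shows "vec_linear (L_star succ prec x)" "vec_linear (\<lambda>x. L_star succ prec x y)"
proof -
  have "bilinear_op (circ_op succ prec)" using assms by (rule bilinear_circ_op)
  then show "vec_linear (L_star succ prec x)" for x
    unfolding L_star_def Lop_def Rop_def bilinear_op_iff_vec_linear by (simp add: vec_linear_add)
  then show "vec_linear (\<lambda>x. L_star succ prec x y)"
    by (simp add: L_star_commute[of _ _ _ y])
qed

lemma vec_linear_L_odot:
  assumes "bilinear_op succ" "bilinear_op prec"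
  shows "vec_linear (L_odot succ prec x)" "vec_linear (\<lambda>x. L_odot succ prec x y)"
  using assms unfolding L_odot_def Lop_def Rop_def bilinear_op_iff_vec_linear
  by (simp_all add: vec_linear_add)

lemma vec_linear_T_op: "vec_linear (T_op s)"
  unfolding vec_linear_def T_op_def
  by (simp add: fun_eq_iff scal_def algebra_simps sum.distrib sum_distrib_left)

lemma pairing_add_right: "pairing \<zeta> (x + y) = pairing \<zeta> x + pairing \<zeta> y"
  by (simp add: pairing_def algebra_simps sum.distrib)

lemma pairing_scal_right: "pairing \<zeta> (scal c x) = c * pairing \<zeta> x"
  by (simp add: pairing_def scal_def sum_distrib_left algebra_simps)

lemma pairing_basis_vec: "pairing (basis_vec j) x = x j"
  by (simp add: pairing_def)

lemma pairing_eq_zero_iff: "(\<forall>\<eta>. pairing \<eta> x = 0) \<longleftrightarrow> x = 0"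
proof
  assume "\<forall>\<eta>. pairing \<eta> x = 0"
  then have "x j = 0" for j
    by (metis pairing_basis_vec)
  then show "x = 0" by (simp add: fun_eq_iff)
qed (simp add: pairing_def)

lemma vec_linear_dual_rep:
  assumes "\<And>y. vec_linear (\<lambda>x. f x y)"
  shows "vec_linear (\<lambda>x. dual_rep f x \<zeta>)"
proof -
  have "f (x + y) w = f x w + f y w" "f (scal c x) w = scal c (f x w)" for x y w c
    using assms[of w] unfolding vec_linear_def by auto
  then show ?thesis
    unfolding vec_linear_def dual_rep_def
    by (simp add: pairing_add_right pairing_scal_right) (simp add: scal_def fun_eq_iff)
qed

lemma pairing_dual_rep:
  assumes "vec_linear (f x)"
  shows "pairing (dual_rep f x \<zeta>) y = - pairing \<zeta> (f x y)"
  unfolding pairing_def dual_rep_def vec_linear_expansion[OF assms, of y]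
  by (simp add: sum_distrib_left sum_distrib_right sum_negf algebra_simps)
    (subst sum.swap, simp add: algebra_simps)

lemma pairing_T_op_flip: "pairing \<zeta> (T_op (flip s) \<eta>) = pairing \<eta> (T_op s \<zeta>)"
  unfolding pairing_def T_op_def flip_def
  by (simp add: sum_distrib_left algebra_simps) (subst sum.swap, simp add: algebra_simps)

lemma T_op_eq_zero_iff: "(\<forall>\<zeta>. T_op D \<zeta> = 0) \<longleftrightarrow> D = 0"
  by (auto simp: fun_eq_iff T_op_def) (metis sum_basis_vec(2))

lemma T_op_diff: "T_op (D - E) \<zeta> = T_op D \<zeta> - T_op E \<zeta>"
  by (simp add: T_op_def fun_eq_iff algebra_simps sum_subtractf)

lemma tensor_map_id_left: "tensor_map id G s a b = (\<Sum>j\<in>UNIV. s a j * G (basis_vec j) b)"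
  unfolding tensor_map_def
  by (subst sum.swap) (simp add: basis_vec_def if_distrib[where f="\<lambda>t. t * _"]
      if_distrib[where f="\<lambda>t. _ * t"] cong: if_cong)

lemma T_op_tensor_map_id_left:
  assumes "vec_linear G"
  shows "T_op (tensor_map id G s) \<zeta> = G (T_op s \<zeta>)"
proof
  fix b
  have "G (T_op s \<zeta>) b = (\<Sum>j\<in>UNIV. T_op s \<zeta> j * G (basis_vec j) b)"
    by (rule vec_linear_expansion[OF assms])
  also have "\<dots> = T_op (tensor_map id G s) \<zeta> b"
    unfolding T_op_def tensor_map_id_left sum_distrib_left sum_distrib_right
    by (subst sum.swap) (simp add: algebra_simps)
  finally show "T_op (tensor_map id G s) \<zeta> b = G (T_op s \<zeta>) b" ..
qed

lemma tensor_map_id_right: "tensor_map F id s a b = (\<Sum>i\<in>UNIV. s i b * F (basis_vec i) a)"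
  unfolding tensor_map_def
  by (simp add: basis_vec_def if_distrib[where f="\<lambda>t. t * _"] if_distrib[where f="\<lambda>t. _ * t"]
      cong: if_cong)

lemma T_op_dual_rep: "T_op s (dual_rep f x \<zeta>) = - T_op (tensor_map (f x) id s) \<zeta>"
proof
  fix b
  show "T_op s (dual_rep f x \<zeta>) b = (- T_op (tensor_map (f x) id s) \<zeta>) b"
    unfolding T_op_def dual_rep_def pairing_def tensor_map_id_right
      sum_distrib_left sum_distrib_right sum_negf mult_minus_right uminus_apply
    by (subst sum.swap) (simp add: algebra_simps)
qed

lemma operator_identity_iff_tensor_identity:
  assumes "vec_linear G"
  shows "(\<forall>\<zeta>. G (T_op s \<zeta>) + T_op s (dual_rep f x \<zeta>) = 0) \<longleftrightarrow>
         tensor_map id G s - tensor_map (f x) id s = 0"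
proof -
  have "G (T_op s \<zeta>) + T_op s (dual_rep f x \<zeta>) =
        T_op (tensor_map id G s - tensor_map (f x) id s) \<zeta>" for \<zeta>
    by (simp add: T_op_diff T_op_tensor_map_id_left[OF assms] T_op_dual_rep)
  then show ?thesis by (simp add: T_op_eq_zero_iff)
qed

lemma operator_identity_iff_dual_identity:
  assumes m: "bilinear_op m"
    and H: "\<And>y. vec_linear (\<lambda>x. H x y)"
    and G: "\<And>x y. G y x = H x y"
  shows "(\<forall>x \<zeta>. H x (T_op s \<zeta>) + T_op s (dual_rep (Lop m) x \<zeta>) = 0) \<longleftrightarrow>
         (\<forall>\<zeta> \<eta>. dual_rep G (T_op s \<zeta>) \<eta> = dual_rep (Rop m) (T_op (flip s) \<eta>) \<zeta>)"
proof -
  let ?\<Phi> = "\<lambda>\<zeta> x. H x (T_op s \<zeta>) + T_op s (dual_rep (Lop m) x \<zeta>)"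
  have m_lin: "vec_linear (\<lambda>x. Lop m x y)" "vec_linear (Lop m x)" for x y
    using m by (simp_all add: bilinear_op_iff_vec_linear Lop_def)
  have \<Phi>_lin: "vec_linear (?\<Phi> \<zeta>)" for \<zeta>
  proof -
    have "vec_linear (\<lambda>x. dual_rep (Lop m) x \<zeta>)"
      using m_lin(1) by (rule vec_linear_dual_rep)
    then have "vec_linear (\<lambda>x. T_op s (dual_rep (Lop m) x \<zeta>))"
      by (rule vec_linear_comp[OF vec_linear_T_op])
    then show ?thesis
      by (rule vec_linear_add[OF H[of "T_op s \<zeta>"]])
  qed
  have gap: "dual_rep G (T_op s \<zeta>) \<eta> j - dual_rep (Rop m) (T_op (flip s) \<eta>) \<zeta> j =
             - pairing \<eta> (?\<Phi> \<zeta> (basis_vec j))" for \<zeta> \<eta> j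
  proof -
    have "pairing \<zeta> (m (basis_vec j) (T_op (flip s) \<eta>)) =
          - pairing \<eta> (T_op s (dual_rep (Lop m) (basis_vec j) \<zeta>))"
      using pairing_dual_rep[of "Lop m" "basis_vec j" \<zeta> "T_op (flip s) \<eta>", OF m_lin(2)]
      by (simp add: Lop_def pairing_T_op_flip)
    then show ?thesis by (simp add: dual_rep_def G Rop_def pairing_add_right)
  qed
  have "(\<forall>x \<zeta>. ?\<Phi> \<zeta> x = 0) \<longleftrightarrow> (\<forall>\<zeta> j. ?\<Phi> \<zeta> (basis_vec j) = 0)"
    using vec_linear_zero_iff_basis[OF \<Phi>_lin] by blast
  also have "\<dots> \<longleftrightarrow> (\<forall>\<zeta> \<eta> j. pairing \<eta> (?\<Phi> \<zeta> (basis_vec j)) = 0)"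
    using pairing_eq_zero_iff by blast
  also have "\<dots> \<longleftrightarrow> (\<forall>\<zeta> \<eta> j. dual_rep G (T_op s \<zeta>) \<eta> j = dual_rep (Rop m) (T_op (flip s) \<eta>) \<zeta> j)"
    using gap by (metis eq_iff_diff_eq_0 neg_equal_0_iff_equal)
  finally show ?thesis by (simp add: fun_eq_iff)
qed

theorem mainTheorem9:
  fixes succ prec :: "('n::finite, 'k::field) binop" and s :: "('n,'k) tensor2"
  assumes "anti_pre_Novikov succ prec"
  shows "(invariant succ prec s \<longleftrightarrow>
           (\<forall>x \<zeta>. L_star succ prec x (T_op s \<zeta>) + T_op s (dual_rep (Lop succ) x \<zeta>) = 0 \<and>
                   L_odot succ prec x (T_op s \<zeta>) + T_op s (dual_rep (Lop (circ_op succ prec)) x \<zeta>) = 0))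
       \<and> ((\<forall>x \<zeta>. L_star succ prec x (T_op s \<zeta>) + T_op s (dual_rep (Lop succ) x \<zeta>) = 0 \<and>
                   L_odot succ prec x (T_op s \<zeta>) + T_op s (dual_rep (Lop (circ_op succ prec)) x \<zeta>) = 0)
          \<longleftrightarrow>
          (\<forall>\<zeta> \<eta>. dual_rep (L_star succ prec) (T_op s \<zeta>) \<eta> = dual_rep (Rop succ) (T_op (flip s) \<eta>) \<zeta> \<and>
                  dual_rep (R_odot succ prec) (T_op s \<zeta>) \<eta> = dual_rep (Rop (circ_op succ prec)) (T_op (flip s) \<eta>) \<zeta>))"
proof -
  have succ: "bilinear_op succ" and prec: "bilinear_op prec"
    using assms unfolding anti_pre_Novikov_def by blast+
  have circ: "bilinear_op (circ_op succ prec)"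
    using succ prec by (rule bilinear_circ_op)
  have star_tensor:
    "(\<forall>\<zeta>. L_star succ prec x (T_op s \<zeta>) + T_op s (dual_rep (Lop succ) x \<zeta>) = 0) \<longleftrightarrow>
     tensor_map id (L_star succ prec x) s - tensor_map (Lop succ x) id s = 0" for x
    by (rule operator_identity_iff_tensor_identity[OF vec_linear_L_star(1)[OF succ prec]])
  have odot_tensor:
    "(\<forall>\<zeta>. L_odot succ prec x (T_op s \<zeta>) + T_op s (dual_rep (Lop (circ_op succ prec)) x \<zeta>) = 0) \<longleftrightarrow>
     tensor_map (Lop (circ_op succ prec) x) id s - tensor_map id (L_odot succ prec x) s = 0" for x
    unfolding operator_identity_iff_tensor_identity[OF vec_linear_L_odot(1)[OF succ prec]]
    by (simp only: right_minus_eq) (rule eq_commute)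
  note star_dual = operator_identity_iff_dual_identity
    [where H = "L_star succ prec" and G = "L_star succ prec",
     OF succ vec_linear_L_star(2)[OF succ prec] L_star_commute]
  note odot_dual = operator_identity_iff_dual_identity
    [where H = "L_odot succ prec" and G = "R_odot succ prec",
     OF circ vec_linear_L_odot(2)[OF succ prec] R_odot_eq_L_odot]
  show ?thesis
    unfolding invariant_def using star_tensor odot_tensor star_dual odot_dual by blast
qed

end
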